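(* Let $x\in\mathcal H$, $\lambda>0$, $\hat\sigma\ge0$, and let $(y,u,\varepsilon)$ be a $\hat\sigma$-approximate PG solution at $(x,\lambda)$. Define $v:=u+\nabla g(y)$ and $\sigma:=\frac{\lambda L}{\sqrt{1+\lambda\mu}}+\hat\sigma$. Then $v\in\partial_\varepsilon f(y)+\nabla g(y)$ and $\frac{\|\lambda v+y-x\|^2}{1+\lambda\mu}+2\lambda\varepsilon\le\sigma^2\|y-x\|^2$.
   Context: $\mathcal H$ is a finite-dimensional real inner product space with norm $\|\cdot\|$. $f,g:\mathcal H\to(-\infty,\infty]$ are proper, closed, convex; $g$ is $\mu$-strongly convex ($\mu>0$). $\Omega\subseteq\mathcal H$ is a nonempty closed convex set containing $\mathrm{dom}\,f$, $P_\Omega$ is the orthogonal projection onto $\Omega$, and $g$ is differentiable on an open set containing $\Omega$ with $\|\nabla g(x)-\nabla g(y)\|\le L\|x-y\|$ for $x,y\in\Omega$, $L>0$. For $\varepsilon\ge0$, $\partial_\varepsilon f(y):=\{u: f(w)\ge f(y)+\langle u,w-y\rangle-\varepsilon\ \forall w\}$. Definition: for $\hat\sigma\ge0$, $(y,u,\varepsilon)\in\mathcal H\times\mathcal H\times[0,\infty)$ is a $\hat\sigma$-approximate Proximal-Gradient (PG) solution at $(x,\lambda)\in\mathcal H\times(0,\infty)$ if, with $z:=P_\Omega(x)$, $u\in\partial_\varepsilon f(y)$ and $\frac{\|\lambda(u+\nabla g(z))+y-x\|^2}{1+\lambda\mu}+2\lambda\varepsilon\le\hat\sigma^2\|y-x\|^2$.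 *)

theory Defs
  imports "HOL-Analysis.Analysis"
begin

text \<open>Extended-real-valued functions H -> (-inf, +inf] are modelled as 'a => ereal
  together with the requirement that -inf is never attained (part of properness).\<close>

definition epigraph :: "('a \<Rightarrow> ereal) \<Rightarrow> ('a \<times> real) set" where
  "epigraph f = {(x, t). f x \<le> ereal t}"

definition edom :: "('a \<Rightarrow> ereal) \<Rightarrow> 'a set" where
  "edom f = {x. f x < \<infinity>}"

definition proper_fun :: "('a \<Rightarrow> ereal) \<Rightarrow> bool" where
  "proper_fun f \<longleftrightarrow> (\<forall>x. f x \<noteq> -\<infinity>) \<and> (\<exists>x. f x \<noteq> \<infinity>)"

definition closed_fun :: "('a::topological_space \<Rightarrow> ereal) \<Rightarrow> bool" where
  "closed_fun f \<longleftrightarrow> closed (epigraph f)"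

definition convex_fun :: "('a::real_vector \<Rightarrow> ereal) \<Rightarrow> bool" where
  "convex_fun f \<longleftrightarrow> convex (epigraph f)"

definition strongly_convex_fun :: "real \<Rightarrow> ('a::real_normed_vector \<Rightarrow> ereal) \<Rightarrow> bool" where
  "strongly_convex_fun \<mu> g \<longleftrightarrow> convex_fun (\<lambda>x. g x - ereal (\<mu> / 2 * (norm x)\<^sup>2))"

definition eps_subdiff :: "('a::real_inner \<Rightarrow> ereal) \<Rightarrow> real \<Rightarrow> 'a \<Rightarrow> 'a set" where
  "eps_subdiff f \<epsilon> y = {u. \<forall>w. f w \<ge> f y + ereal (inner u (w - y)) - ereal \<epsilon>}"

definition approx_PG_solution ::
  "('a::euclidean_space \<Rightarrow> ereal) \<Rightarrow> ('a \<Rightarrow> 'a) \<Rightarrow> 'a set \<Rightarrow> real \<Rightarrow> real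
     \<Rightarrow> 'a \<Rightarrow> real \<Rightarrow> 'a \<Rightarrow> 'a \<Rightarrow> real \<Rightarrow> bool" where
  "approx_PG_solution f gradg \<Omega> \<mu> \<sigma>h x lam y u \<epsilon> \<longleftrightarrow>
     \<epsilon> \<ge> 0 \<and> u \<in> eps_subdiff f \<epsilon> y \<and>
     (norm (lam *\<^sub>R (u + gradg (closest_point \<Omega> x)) + y - x))\<^sup>2 / (1 + lam * \<mu>) + 2 * lam * \<epsilon>
       \<le> \<sigma>h\<^sup>2 * (norm (y - x))\<^sup>2"

end

theory Submission
  imports Defs
begin

text \<open>Replacing \<open>\<nabla>g(P\<^sub>\<Omega> x)\<close> by \<open>\<nabla>g(y)\<close> moves the residual by at most
  \<open>\<lambda>L\<parallel>y - P\<^sub>\<Omega> x\<parallel> \<le> \<lambda>L\<parallel>y - x\<parallel>\<close>, because \<open>y \<in> dom f \<subseteq> \<Omega>\<close> and \<open>P\<^sub>\<Omega>\<close> is nonexpansive.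
  Dividing by \<open>\<surd>(1 + \<lambda>\<mu>)\<close>, the relative error criterion absorbs this additive perturbation
  into the tolerance, which grows from \<open>\<sigma>\<^sub>h\<close> to \<open>\<lambda>L/\<surd>(1 + \<lambda>\<mu>) + \<sigma>\<^sub>h\<close>.\<close>

lemma eps_subdiff_imp_in_edom:
  assumes "proper_fun f" and "u \<in> eps_subdiff f \<epsilon> y"
  shows "y \<in> edom f"
proof -
  obtain w where "f w \<noteq> \<infinity>" using assms(1) unfolding proper_fun_def by auto
  moreover have "f y + ereal (inner u (w - y)) - ereal \<epsilon> \<le> f w"
    using assms(2) unfolding eps_subdiff_def by auto
  ultimately have "f y \<noteq> \<infinity>" by auto
  then show ?thesis unfolding edom_def by (simp add: top.not_eq_extremum)
qed

lemma norm_diff_closest_point_le: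
  fixes S :: "'a::euclidean_space set"
  assumes "convex S" "closed S" "S \<noteq> {}" "y \<in> S"
  shows "norm (y - closest_point S x) \<le> norm (y - x)"
  using closest_point_lipschitz[OF assms(1-3), of y x] closest_point_self[OF assms(4)]
  by (simp add: dist_norm)

lemma relative_error_bound_perturb:
  fixes a n K d t c \<sigma> :: real
  assumes "c > 0" "t \<ge> 0" "\<sigma> \<ge> 0" "d \<ge> 0" "K \<ge> 0" "n \<ge> 0"
    and n_le: "n \<le> a + K * d"
    and bound: "a\<^sup>2 / c + t \<le> \<sigma>\<^sup>2 * d\<^sup>2"
  shows "n\<^sup>2 / c + t \<le> (K / sqrt c + \<sigma>)\<^sup>2 * d\<^sup>2"
proof -
  define A where "A = a / sqrt c"
  define B where "B = K * d / sqrt c"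
  have B_nonneg: "B \<ge> 0" unfolding B_def using assms by simp
  have A_sq: "A\<^sup>2 = a\<^sup>2 / c" unfolding A_def using \<open>c > 0\<close> by (simp add: power_divide)
  have "A\<^sup>2 \<le> (\<sigma> * d)\<^sup>2"
    using bound \<open>t \<ge> 0\<close> unfolding A_sq by (simp add: power_mult_distrib)
  then have A_le: "A \<le> \<sigma> * d"
    using assms(3,4) by (meson abs_le_D1 mult_nonneg_nonneg power2_le_iff_abs_le)
  have "n\<^sup>2 / c = (n / sqrt c)\<^sup>2" using \<open>c > 0\<close> by (simp add: power_divide)
  also have "\<dots> \<le> (A + B)\<^sup>2"
    using n_le \<open>n \<ge> 0\<close> \<open>c > 0\<close> unfolding A_def B_def
    by (intro power_mono) (simp_all add: divide_right_mono add_divide_distrib[symmetric])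
  finally have "n\<^sup>2 / c + t \<le> (A\<^sup>2 + t) + 2 * A * B + B\<^sup>2"
    by (simp add: power2_eq_square algebra_simps)
  also have "\<dots> \<le> (\<sigma> * d)\<^sup>2 + 2 * (\<sigma> * d) * B + B\<^sup>2"
    using bound A_le B_nonneg unfolding A_sq
    by (intro add_mono mult_right_mono) (simp_all add: power_mult_distrib)
  also have "\<dots> = (\<sigma> * d + B)\<^sup>2" by (simp add: power2_eq_square algebra_simps)
  also have "\<sigma> * d + B = (K / sqrt c + \<sigma>) * d" unfolding B_def by (simp add: algebra_simps)
  finally show ?thesis by (simp add: power_mult_distrib)
qed

theorem proposition5p1:
  fixes f g :: "'a::euclidean_space \<Rightarrow> ereal"
    and gradg :: "'a \<Rightarrow> 'a"
    and \<Omega> U :: "'a set"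
    and \<mu> L lam \<sigma>h \<epsilon> :: real
    and x y u :: 'a
  assumes f_proper: "proper_fun f" and f_closed: "closed_fun f" and f_convex: "convex_fun f"
    and g_proper: "proper_fun g" and g_closed: "closed_fun g" and g_convex: "convex_fun g"
    and mu_pos: "\<mu> > 0" and g_strong: "strongly_convex_fun \<mu> g"
    and Omega_ne: "\<Omega> \<noteq> {}" and Omega_closed: "closed \<Omega>" and Omega_convex: "convex \<Omega>"
    and dom_sub: "edom f \<subseteq> \<Omega>"
    and U_open: "open U" and Omega_sub_U: "\<Omega> \<subseteq> U"
    and g_finite: "\<forall>z\<in>U. \<bar>g z\<bar> \<noteq> \<infinity>"
    and g_grad: "\<forall>z\<in>U. ((\<lambda>w. real_of_ereal (g w)) has_derivative (\<lambda>h. inner (gradg z) h)) (at z)"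
    and L_pos: "L > 0"
    and g_lip: "\<forall>a\<in>\<Omega>. \<forall>b\<in>\<Omega>. norm (gradg a - gradg b) \<le> L * norm (a - b)"
    and lam_pos: "lam > 0" and sigh_nonneg: "\<sigma>h \<ge> 0"
    and PG: "approx_PG_solution f gradg \<Omega> \<mu> \<sigma>h x lam y u \<epsilon>"
  shows "let v = u + gradg y; \<sigma> = lam * L / sqrt (1 + lam * \<mu>) + \<sigma>h in
           v \<in> (\<lambda>w. w + gradg y) ` eps_subdiff f \<epsilon> y \<and>
           (norm (lam *\<^sub>R v + y - x))\<^sup>2 / (1 + lam * \<mu>) + 2 * lam * \<epsilon> \<le> \<sigma>\<^sup>2 * (norm (y - x))\<^sup>2"
proof -
  define z where "z = closest_point \<Omega> x"
  have eps: "\<epsilon> \<ge> 0" and u_sub: "u \<in> eps_subdiff f \<epsilon> y"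
    and bound: "(norm (lam *\<^sub>R (u + gradg z) + y - x))\<^sup>2 / (1 + lam * \<mu>) + 2 * lam * \<epsilon>
       \<le> \<sigma>h\<^sup>2 * (norm (y - x))\<^sup>2"
    using PG unfolding approx_PG_solution_def z_def by auto
  have y_in: "y \<in> \<Omega>" using eps_subdiff_imp_in_edom[OF f_proper u_sub] dom_sub by blast
  have z_in: "z \<in> \<Omega>" unfolding z_def by (rule closest_point_in_set[OF Omega_closed Omega_ne])
  have "norm (gradg y - gradg z) \<le> L * norm (y - z)" using g_lip y_in z_in by blast
  also have "\<dots> \<le> L * norm (y - x)"
    using norm_diff_closest_point_le[OF Omega_convex Omega_closed Omega_ne y_in] L_pos
    unfolding z_def by simp
  finally have "norm (lam *\<^sub>R (gradg y - gradg z)) \<le> lam * L * norm (y - x)"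
    using lam_pos by (simp add: mult_left_mono mult.assoc)
  then have "norm (lam *\<^sub>R (u + gradg y) + y - x)
      \<le> norm (lam *\<^sub>R (u + gradg z) + y - x) + lam * L * norm (y - x)"
    using norm_triangle_ineq[of "lam *\<^sub>R (u + gradg z) + y - x" "lam *\<^sub>R (gradg y - gradg z)"]
    by (simp add: algebra_simps)
  then have "(norm (lam *\<^sub>R (u + gradg y) + y - x))\<^sup>2 / (1 + lam * \<mu>) + 2 * lam * \<epsilon>
      \<le> (lam * L / sqrt (1 + lam * \<mu>) + \<sigma>h)\<^sup>2 * (norm (y - x))\<^sup>2"
    using relative_error_bound_perturb[OF _ _ sigh_nonneg _ _ _ _ bound] lam_pos mu_pos L_pos eps
    by (simp add: add_pos_pos)
  then show ?thesis using u_sub by (auto simp: Let_def)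
qed

end
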